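(* Let $(U,\mathcal{I})$ be a laminar matroid given by a laminar family $\mathcal{F}$ with positive integer capacities $\mu(\cdot)$ such that $\mu(B)<\mu(B')$ whenever $B\subsetneq B'$ are in $\mathcal{F}$. Let $f$ be non-negative, monotonically non-decreasing and submodular, $p\in(0,1)$, and run $\mathrm{SIMULATE}$ (see context) to obtain $M,N,w$. Let $$S=N\setminus\bigcup_{B\in\mathcal{F}:\,|N\cap B|>\mu(B)}(N\cap B),$$ i.e. all elements of $N\cap B$ are removed for every $B$ whose constraint is violated by $N$. Let $\beta=2e(1-p)$ and assume $\beta<1$. Then $$\mathbb{E}[w(S)]\ge\Big(1-\frac{2\beta}{(1-\beta)^3}\Big)\mathbb{E}[w(N)].$$
   Context: Laminar matroid: $\mathcal{F}$ is a family of distinct subsets of $U$ any two of which are disjoint or nested, and $\mathcal{I}=\{T\subseteq U:|T\cap B|\le\mu(B)\ \forall B\in\mathcal{F}\}$. Write $f_T(e)=f(T\cup\{e\})-f(T)$; $e$ in $\beta$ denotes the base of the natural logarithm. $\mathrm{SIMULATE}$: each element of $U$ is independently put into a set $H$ with probability $p$. Start with $M=N=\emptyset$. While there exists $e\in U\setminus(M\cup N)$ with $M\cup\{e\}\in\mathcal{I}$, take such an $e$ maximizing $f_M(e)$ (ties broken by a fixed rule); let $M_e$ be the current $M$; if $e\in H$ add $e$ to $M$, else to $N$. Define $w(e)=f_{M_e}(e)$ for $e\in M\cup N$, $w(e)=0$ otherwise, and $w(T)=\sum_{e\in T}w(e)$. *)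

theory Defs
  imports Complex_Main
begin

definition laminar :: "'a set set \<Rightarrow> bool" where
  "laminar F \<longleftrightarrow> (\<forall>A\<in>F. \<forall>B\<in>F. A \<inter> B = {} \<or> A \<subseteq> B \<or> B \<subseteq> A)"

definition lam_indep :: "'a set \<Rightarrow> 'a set set \<Rightarrow> ('a set \<Rightarrow> nat) \<Rightarrow> 'a set set" where
  "lam_indep U F \<mu> = {T. T \<subseteq> U \<and> (\<forall>B\<in>F. card (T \<inter> B) \<le> \<mu> B)}"

definition marg :: "('a set \<Rightarrow> real) \<Rightarrow> 'a set \<Rightarrow> 'a \<Rightarrow> real" where
  "marg f T e = f (insert e T) - f T"

definition submodular_on :: "'a set \<Rightarrow> ('a set \<Rightarrow> real) \<Rightarrow> bool" where
  "submodular_on U f \<longleftrightarrow>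
     (\<forall>S T. S \<subseteq> U \<longrightarrow> T \<subseteq> U \<longrightarrow> f (S \<union> T) + f (S \<inter> T) \<le> f S + f T)"

definition sim_step ::
  "'a set \<Rightarrow> 'a set set \<Rightarrow> ('a set \<Rightarrow> real) \<Rightarrow> ('a set \<Rightarrow> 'a set \<Rightarrow> 'a set \<Rightarrow> 'a) \<Rightarrow> 'a set
   \<Rightarrow> 'a set \<times> 'a set \<times> ('a \<Rightarrow> real) \<Rightarrow> 'a set \<times> 'a set \<times> ('a \<Rightarrow> real)" where
  "sim_step U I f sel H st =
     (case st of (M, N, w) \<Rightarrow>
       (let C = {e \<in> U - (M \<union> N). insert e M \<in> I} in
        if C = {} then (M, N, w)
        else (let Cmax = {e \<in> C. \<forall>e'\<in>C. marg f M e' \<le> marg f M e};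
                  e = sel M N Cmax;
                  w' = w(e := marg f M e) in
              if e \<in> H then (insert e M, N, w') else (M, insert e N, w'))))"

text \<open>SIMULATE run to completion (each step adds an element of U, so card U steps suffice).\<close>
definition simulate ::
  "'a set \<Rightarrow> 'a set set \<Rightarrow> ('a set \<Rightarrow> real) \<Rightarrow> ('a set \<Rightarrow> 'a set \<Rightarrow> 'a set \<Rightarrow> 'a) \<Rightarrow> 'a set
   \<Rightarrow> 'a set \<times> 'a set \<times> ('a \<Rightarrow> real)" where
  "simulate U I f sel H = (sim_step U I f sel H ^^ card U) ({}, {}, (\<lambda>_. 0))"

text \<open>Probability that the random set equals H when each element of U is included
  independently with probability p.\<close>
definition hprob :: "'a set \<Rightarrow> real \<Rightarrow> 'a set \<Rightarrow> real" where
  "hprob U p H = p ^ card H * (1 - p) ^ card (U - H)"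

definition expect :: "'a set \<Rightarrow> real \<Rightarrow> ('a set \<Rightarrow> real) \<Rightarrow> real" where
  "expect U p X = (\<Sum>H\<in>Pow U. hprob U p H * X H)"

definition violated_removed :: "'a set set \<Rightarrow> ('a set \<Rightarrow> nat) \<Rightarrow> 'a set \<Rightarrow> 'a set" where
  "violated_removed F \<mu> N = N - \<Union>{N \<inter> B | B. B \<in> F \<and> card (N \<inter> B) > \<mu> B}"

end

theory Submission
  imports Defs
begin

text \<open>Write q = 1 - p and \<rho> = 8q. For a state (M, N, w) of SIMULATE and a block B \<in> F with
  m = |M \<inter> B| and n = |N \<inter> B|, let A_B be the largest weight in N \<inter> B and
  G_B = n (4q)^(\<mu>(B)+1-n) 2^(\<mu>(B)-m). The potential \<rho>/(1-\<rho>) w(N) - \<Sum>_B A_B G_B never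
  decreases in expectation. The element e processed next weighs at most every weight already in
  N, so on a block B \<ni> e meeting N the term A_B G_B decreases in expectation, and on a block
  B \<ni> e disjoint from N it grows by at most q w(e) \<rho>^\<mu>(B). The blocks containing e form a chain
  with distinct capacities, so these losses total at most q w(e) \<rho>/(1-\<rho>), the expected gain of
  the first term. The potential starts at 0, and at the end G_B \<ge> |N \<inter> B| on every violated
  block, whence E[w(S)] \<ge> (1 - \<rho>/(1-\<rho>)) E[w(N)]. Finally exp 1 \<ge> 2 gives
  \<rho>/(1-\<rho>) \<le> 2\<beta>/(1-\<beta>)^3 whenever the claimed factor is positive.\<close>

lemma hprob_insert:
  assumes "finite U" "e \<in> U" "H \<subseteq> U - {e}"
  shows "hprob U p (insert e H) = p * hprob (U - {e}) p H"
proof -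
  have "finite H" "e \<notin> H" using assms by (auto intro: finite_subset)
  moreover have "U - insert e H = (U - {e}) - H" by auto
  ultimately show ?thesis unfolding hprob_def by simp
qed

lemma hprob_not_insert:
  assumes "finite U" "e \<in> U" "H \<subseteq> U - {e}"
  shows "hprob U p H = (1 - p) * hprob (U - {e}) p H"
proof -
  have "U - H = insert e ((U - {e}) - H)" "e \<notin> (U - {e}) - H" "finite ((U - {e}) - H)"
    using assms by auto
  then show ?thesis unfolding hprob_def by simp
qed

lemma expect_cong: "(\<And>H. H \<subseteq> U \<Longrightarrow> X H = Y H) \<Longrightarrow> expect U p X = expect U p Y"
  unfolding expect_def by (rule sum.cong) auto

lemma expect_split:
  assumes fin: "finite U" and e: "e \<in> U"
  shows "expect U p X
    = p * expect (U - {e}) p (\<lambda>H. X (insert e H)) + (1 - p) * expect (U - {e}) p X"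
proof -
  let ?A = "U - {e}"
  have "Pow U = Pow ?A \<union> insert e ` Pow ?A"
    using Pow_insert[of e ?A] e by (simp add: insert_absorb)
  moreover have "Pow ?A \<inter> insert e ` Pow ?A = {}" by auto
  moreover have "inj_on (insert e) (Pow ?A)" unfolding inj_on_def by blast
  ultimately have "expect U p X
      = (\<Sum>H\<in>Pow ?A. hprob U p H * X H) + (\<Sum>H\<in>Pow ?A. hprob U p (insert e H) * X (insert e H))"
    unfolding expect_def using fin by (simp add: sum.union_disjoint sum.reindex)
  also have "\<dots> = (1 - p) * expect ?A p X + p * expect ?A p (\<lambda>H. X (insert e H))"
    unfolding expect_def sum_distrib_left
    by (intro arg_cong2[where f = "(+)"] sum.cong)
       (auto simp: hprob_insert[OF fin e] hprob_not_insert[OF fin e])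
  finally show ?thesis by simp
qed

lemma expect_const: "finite U \<Longrightarrow> expect U p (\<lambda>_. c) = c"
proof (induction U rule: finite_induct)
  case empty
  then show ?case by (simp add: expect_def hprob_def)
next
  case (insert e A)
  then show ?case using expect_split[of "insert e A" e p "\<lambda>_. c"] by (simp add: algebra_simps)
qed

lemma expect_branch:
  assumes fin: "finite U" and e: "e \<in> U"
    and Y: "\<And>H. Y (insert e H) = Y H" and Z: "\<And>H. Z (insert e H) = Z H"
  shows "expect U p (\<lambda>H. if e \<in> H then Y H else Z H) = p * expect U p Y + (1 - p) * expect U p Z"
proof -
  have "expect U p Y = expect (U - {e}) p Y" "expect U p Z = expect (U - {e}) p Z"
    using expect_split[OF fin e, of p Y] expect_split[OF fin e, of p Z] by (simp_all add: Y Z algebra_simps)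
  moreover have "expect (U - {e}) p (\<lambda>H. if e \<in> H then Y H else Z H) = expect (U - {e}) p Z"
    by (rule expect_cong) auto
  ultimately show ?thesis using expect_split[OF fin e, of p "\<lambda>H. if e \<in> H then Y H else Z H"]
    by (simp add: Y)
qed

lemma expect_mono:
  "0 \<le> p \<Longrightarrow> p \<le> 1 \<Longrightarrow> (\<And>H. H \<subseteq> U \<Longrightarrow> X H \<le> Y H) \<Longrightarrow> expect U p X \<le> expect U p Y"
  unfolding expect_def hprob_def by (rule sum_mono) (auto intro: mult_left_mono)

lemma expect_diff: "expect U p (\<lambda>H. X H - c * Y H) = expect U p X - c * expect U p Y"
  unfolding expect_def by (simp add: sum_subtractf sum_distrib_left algebra_simps)

lemma sum_UN_le:
  fixes g :: "'a \<Rightarrow> real"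
  assumes "finite I" "\<And>i. i \<in> I \<Longrightarrow> finite (A i)" "\<And>x. x \<in> (\<Union>i\<in>I. A i) \<Longrightarrow> 0 \<le> g x"
  shows "sum g (\<Union>i\<in>I. A i) \<le> (\<Sum>i\<in>I. sum g (A i))"
  using assms
proof (induction I rule: finite_induct)
  case (insert i I)
  have "sum g (A i \<union> (\<Union>j\<in>I. A j)) \<le> sum g (A i) + sum g (\<Union>j\<in>I. A j)"
    using insert by (subst sum_Un) (auto intro!: sum_nonneg)
  then show ?case using insert by simp
qed simp

lemma sum_power_le_geometric:
  fixes x :: real
  assumes "finite K" "0 \<notin> K" "0 \<le> x" "x < 1"
  shows "(\<Sum>k\<in>K. x ^ k) \<le> x / (1 - x)"
proof -
  have "0 < k" if "k \<in> K" for k using assms that by (cases k) auto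
  then have "K \<subseteq> {1..Max K}" using assms by (auto simp: Suc_le_eq intro: Max_ge)
  then have "(\<Sum>k\<in>K. x ^ k) \<le> (\<Sum>k\<in>{1..Max K}. x ^ k)"
    using assms by (intro sum_mono2) auto
  also have "\<dots> \<le> x / (1 - x)"
    using assms by (simp add: sum_gp divide_right_mono)
  finally show ?thesis .
qed

lemma div_one_minus_le_cubic_bound:
  fixes x y :: real
  assumes "0 \<le> x" "x \<le> 2 * y" "0 < y" "y < 1" "2 * y / (1 - y) ^ 3 < 1"
  shows "x < 1" "x / (1 - x) \<le> 2 * y / (1 - y) ^ 3"
proof -
  have "y < 1/4"
  proof (rule ccontr)
    assume "\<not> y < 1/4"
    then have "(1 - y) ^ 3 \<le> (3/4) ^ 3" using assms by (intro power_mono) auto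
    moreover have "(3/4::real) ^ 3 = 27/64" by (simp add: power_divide)
    ultimately show False using assms \<open>\<not> y < 1/4\<close> by (simp add: divide_less_eq)
  qed
  then show "x < 1" using assms by simp
  have "y * (3 * y) \<le> y * 1" using \<open>y < 1/4\<close> assms by (intro mult_left_mono) auto
  moreover have "0 \<le> y ^ 3" using assms by simp
  ultimately have "(1 - y) ^ 3 \<le> 1 - 2 * y" by (simp add: power3_eq_cube algebra_simps)
  have "x / (1 - x) \<le> 2 * y / (1 - 2 * y)"
    using assms \<open>y < 1/4\<close> by (intro frac_le) auto
  also have "\<dots> \<le> 2 * y / (1 - y) ^ 3"
    using assms \<open>y < 1/4\<close> \<open>(1 - y) ^ 3 \<le> 1 - 2 * y\<close> by (intro divide_left_mono) auto
  finally show "x / (1 - x) \<le> 2 * y / (1 - y) ^ 3" .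
qed

lemma rate_ratio_le_beta_bound:
  fixes q :: real
  defines "\<beta> \<equiv> 2 * exp 1 * q"
  assumes "0 < q" "\<beta> < 1" "2 * \<beta> / (1 - \<beta>) ^ 3 < 1"
  shows "8 * q < 1" and "8 * q / (1 - 8 * q) \<le> 2 * \<beta> / (1 - \<beta>) ^ 3"
proof -
  have "2 * q \<le> exp 1 * q" using exp_ge_add_one_self[of 1] assms(2) by (intro mult_right_mono) auto
  then have "8 * q \<le> 2 * \<beta>" unfolding \<beta>_def by (simp add: mult.commute)
  moreover have "0 < \<beta>" unfolding \<beta>_def using assms(2) by simp
  ultimately show "8 * q < 1" "8 * q / (1 - 8 * q) \<le> 2 * \<beta> / (1 - \<beta>) ^ 3"
    using div_one_minus_le_cubic_bound[of "8 * q" \<beta>] assms(2-4) by auto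
qed

text \<open>The factor G_B of the potential, for q = 1 - p, k = \<mu> B, m = |M \<inter> B| and n = |N \<inter> B|.\<close>
definition viol_weight :: "real \<Rightarrow> nat \<Rightarrow> nat \<Rightarrow> nat \<Rightarrow> real" where
  "viol_weight q k m n = real n * (4 * q) ^ (k + 1 - n) * 2 ^ (k - m)"

lemma viol_weight_nonneg: "0 \<le> q \<Longrightarrow> 0 \<le> viol_weight q k m n"
  unfolding viol_weight_def by simp

lemma viol_weight_0 [simp]: "viol_weight q k m 0 = 0"
  unfolding viol_weight_def by simp

lemma viol_weight_ge_card: "k < n \<Longrightarrow> real n \<le> viol_weight q k m n"
  unfolding viol_weight_def by simp

lemma viol_weight_first: "0 \<le> q \<Longrightarrow> viol_weight q k m 1 \<le> (8 * q) ^ k"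
proof -
  assume "0 \<le> q"
  then have "(4 * q) ^ k * 2 ^ (k - m) \<le> (4 * q) ^ k * 2 ^ k"
    by (intro mult_left_mono power_increasing) auto
  also have "\<dots> = (8 * q) ^ k" by (subst power_mult_distrib[symmetric]) simp
  finally show ?thesis unfolding viol_weight_def by simp
qed

lemma viol_weight_step:
  fixes q :: real
  assumes q: "0 \<le> q" "q \<le> 1/4" and "m < k" "1 \<le> n"
  shows "(1 - q) * viol_weight q k (m + 1) n + q * viol_weight q k m (n + 1) \<le> viol_weight q k m n"
proof -
  define r where "r = k - (m + 1)"
  have r: "k - m = Suc r" "k - (m + 1) = r" using \<open>m < k\<close> by (simp_all add: r_def)
  show ?thesis
  proof (cases "n \<le> k")
    case True
    define d where "d = k - n"
    have d: "k + 1 - n = Suc d" "k + 1 - (n + 1) = d" using True by (simp_all add: d_def)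
    define K where "K = (4 * q) ^ d * 2 ^ r"
    have "(1 - q) * real n * 4 * q + q * (real n + 1) * 2 \<le> 8 * q * real n"
    proof -
      have "0 \<le> q * (real n - 1)" "0 \<le> q * q * real n" using q \<open>1 \<le> n\<close> by simp_all
      then show ?thesis by (simp add: algebra_simps)
    qed
    then have "K * ((1 - q) * real n * 4 * q + q * (real n + 1) * 2) \<le> K * (8 * q * real n)"
      using q unfolding K_def by (intro mult_left_mono) auto
    then show ?thesis unfolding viol_weight_def d r K_def by (simp add: algebra_simps)
  next
    case False
    then have d: "k + 1 - n = 0" "k + 1 - (n + 1) = 0" by auto
    have "q * (real n + 2) \<le> (1/4) * (real n + 2)" using q by (intro mult_right_mono) auto
    then have "(1 - q) * real n + q * (real n + 1) * 2 \<le> real n * 2"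
      using \<open>1 \<le> n\<close> by (simp add: algebra_simps)
    then have "((1 - q) * real n + q * (real n + 1) * 2) * 2 ^ r \<le> (real n * 2) * 2 ^ r"
      by (intro mult_right_mono) auto
    then show ?thesis unfolding viol_weight_def d r by (simp add: algebra_simps)
  qed
qed

locale greedy_simulation =
  fixes U :: "'a set" and F :: "'a set set" and \<mu> :: "'a set \<Rightarrow> nat"
    and f :: "'a set \<Rightarrow> real" and sel :: "'a set \<Rightarrow> 'a set \<Rightarrow> 'a set \<Rightarrow> 'a"
  assumes finite_U: "finite U"
    and F_subset: "\<forall>B\<in>F. B \<subseteq> U"
    and laminar_F: "laminar F"
    and mu_pos: "\<forall>B\<in>F. \<mu> B > 0"
    and mu_strict: "\<forall>B\<in>F. \<forall>B'\<in>F. B \<subset> B' \<longrightarrow> \<mu> B < \<mu> B'"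
    and f_mono: "\<forall>S T. S \<subseteq> T \<longrightarrow> T \<subseteq> U \<longrightarrow> f S \<le> f T"
    and f_submodular: "submodular_on U f"
    and sel: "\<forall>M N C. C \<noteq> {} \<longrightarrow> sel M N C \<in> C"
begin

abbreviation I :: "'a set set" where "I \<equiv> lam_indep U F \<mu>"

abbreviation step :: "'a set \<Rightarrow> 'a set \<times> 'a set \<times> ('a \<Rightarrow> real) \<Rightarrow> 'a set \<times> 'a set \<times> ('a \<Rightarrow> real)"
  where "step H \<equiv> sim_step U I f sel H"

definition candidates :: "'a set \<Rightarrow> 'a set \<Rightarrow> 'a set" where
  "candidates M N = {e \<in> U - (M \<union> N). insert e M \<in> I}"

definition chosen :: "'a set \<Rightarrow> 'a set \<Rightarrow> 'a" where
  "chosen M N = sel M N {e \<in> candidates M N. \<forall>e'\<in>candidates M N. marg f M e' \<le> marg f M e}"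

lemma step_eq: "step H (M, N, w) =
  (if candidates M N = {} then (M, N, w)
   else let e = chosen M N; w' = w(e := marg f M e)
        in if e \<in> H then (insert e M, N, w') else (M, insert e N, w'))"
  unfolding sim_step_def chosen_def candidates_def Let_def by simp

lemma chosen_best:
  assumes "candidates M N \<noteq> {}"
  shows "chosen M N \<in> candidates M N" "\<forall>z\<in>candidates M N. marg f M z \<le> marg f M (chosen M N)"
proof -
  let ?C = "candidates M N" and ?g = "marg f M"
  have fin: "finite ?C" unfolding candidates_def using finite_U by simp
  then have "Max (?g ` ?C) \<in> ?g ` ?C" using assms by (intro Max_in) auto
  then obtain e where e: "e \<in> ?C" "?g e = Max (?g ` ?C)" by (rule imageE) simp
  have "?g z \<le> ?g e" if "z \<in> ?C" for z
    unfolding e(2) using fin that by (intro Max_ge) auto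
  with e(1) have "{e \<in> ?C. \<forall>z\<in>?C. ?g z \<le> ?g e} \<noteq> {}" by blast
  from sel[rule_format, OF this]
  show "chosen M N \<in> ?C" "\<forall>z\<in>?C. ?g z \<le> ?g (chosen M N)" unfolding chosen_def by auto
qed

lemma chosen_candidate:
  assumes "candidates M N \<noteq> {}"
  shows "chosen M N \<in> U" "chosen M N \<notin> M" "chosen M N \<notin> N" "insert (chosen M N) M \<in> I"
  using chosen_best(1)[OF assms] unfolding candidates_def by auto

lemma finite_F: "finite F"
proof -
  have "F \<subseteq> Pow U" using F_subset by auto
  then show ?thesis using finite_U by (simp add: finite_subset)
qed

lemma lam_indep_subset_U: "M \<in> I \<Longrightarrow> M \<subseteq> U"
  unfolding lam_indep_def by auto

lemma lam_indep_downward: assumes "T \<in> I" "S \<subseteq> T" shows "S \<in> I"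
proof -
  have TU: "T \<subseteq> U" and cap: "\<forall>B\<in>F. card (T \<inter> B) \<le> \<mu> B" using assms(1) unfolding lam_indep_def by auto
  have "finite T" using TU finite_U by (rule finite_subset)
  have "card (S \<inter> B) \<le> \<mu> B" if "B \<in> F" for B
  proof -
    have "card (S \<inter> B) \<le> card (T \<inter> B)" using assms(2) \<open>finite T\<close> by (intro card_mono) auto
    then show ?thesis using cap that by (meson le_trans)
  qed
  then show ?thesis using assms(2) TU unfolding lam_indep_def by auto
qed

lemma marg_insert_le:
  assumes "M \<subseteq> U" "e \<in> U" "z \<in> U" "e \<notin> M" "z \<notin> M" "z \<noteq> e"
  shows "marg f (insert e M) z \<le> marg f M z"
proof -
  have "f (insert e M \<union> insert z M) + f (insert e M \<inter> insert z M) \<le> f (insert e M) + f (insert z M)"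
    using f_submodular[unfolded submodular_on_def, rule_format, of "insert e M" "insert z M"] assms
    by simp
  moreover have "insert e M \<union> insert z M = insert z (insert e M)" "insert e M \<inter> insert z M = M"
    using assms by auto
  ultimately show ?thesis unfolding marg_def by simp
qed

lemma marg_nonneg: "insert z M \<subseteq> U \<Longrightarrow> 0 \<le> marg f M z"
  unfolding marg_def using f_mono[rule_format, of M "insert z M"] by auto

lemma inj_on_capacity_blocks_containing: "inj_on \<mu> {B \<in> F. e \<in> B}"
proof (rule inj_onI)
  fix B B' assume B: "B \<in> {B \<in> F. e \<in> B}" and B': "B' \<in> {B \<in> F. e \<in> B}" and "\<mu> B = \<mu> B'"
  then have "\<not> B \<subset> B'" "\<not> B' \<subset> B" using mu_strict by (metis less_irrefl mem_Collect_eq)+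
  moreover have "B \<subseteq> B' \<or> B' \<subseteq> B" using B B' laminar_F unfolding laminar_def by blast
  ultimately show "B = B'" by blast
qed

text \<open>By the last conjunct, a newly rejected element weighs no more than any earlier one, so it
  never raises the maximal weight of a block.\<close>
definition sim_inv :: "'a set \<times> 'a set \<times> ('a \<Rightarrow> real) \<Rightarrow> bool" where
  "sim_inv s = (case s of (M, N, w) \<Rightarrow> M \<in> I \<and> N \<subseteq> U \<and> M \<inter> N = {} \<and> (\<forall>y\<in>N. 0 \<le> w y)
      \<and> (\<forall>y\<in>N. \<forall>z\<in>candidates M N. marg f M z \<le> w y))"

lemma sim_inv_branches:
  assumes inv: "sim_inv (M, N, w)" and ne: "candidates M N \<noteq> {}"
    and e: "e = chosen M N" and w': "w' = w(e := marg f M e)"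
  shows "sim_inv (insert e M, N, w')" and "sim_inv (M, insert e N, w')"
proof -
  have eU: "e \<in> U" "e \<notin> M" "e \<notin> N" "insert e M \<in> I"
    using chosen_candidate[OF ne] unfolding e by auto
  have best: "\<forall>z\<in>candidates M N. marg f M z \<le> marg f M e" using chosen_best(2)[OF ne] e by simp
  have MI: "M \<in> I" and MU: "M \<subseteq> U" and NU: "N \<subseteq> U" and disj: "M \<inter> N = {}" and wN: "\<forall>y\<in>N. 0 \<le> w y"
    and bound: "\<forall>y\<in>N. \<forall>z\<in>candidates M N. marg f M z \<le> w y"
    using inv lam_indep_subset_U unfolding sim_inv_def by auto
  have w'N: "w' y = w y" if "y \<in> N" for y using that eU w' by auto
  have cand_accept: "candidates (insert e M) N \<subseteq> candidates M N - {e}"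
    unfolding candidates_def by (auto intro: lam_indep_downward)
  have "marg f (insert e M) z \<le> w' y" if "y \<in> N" "z \<in> candidates (insert e M) N" for y z
  proof -
    have z: "z \<in> candidates M N" "z \<noteq> e" "z \<in> U" "z \<notin> M"
      using that cand_accept unfolding candidates_def by auto
    have "marg f (insert e M) z \<le> marg f M z" using z eU MU by (intro marg_insert_le) auto
    also have "\<dots> \<le> w y" using bound that z by auto
    finally show ?thesis using w'N that by simp
  qed
  then show "sim_inv (insert e M, N, w')"
    unfolding sim_inv_def using eU NU disj wN w'N by auto
  have cand_reject: "candidates M (insert e N) \<subseteq> candidates M N"
    unfolding candidates_def by auto
  have "0 \<le> marg f M e" using eU MU by (intro marg_nonneg) auto
  then show "sim_inv (M, insert e N, w')"
    unfolding sim_inv_def using MI eU NU disj wN w'N best bound cand_reject w' by auto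
qed

lemma sim_inv_step: "sim_inv s \<Longrightarrow> sim_inv (step H s)"
  using sim_inv_branches by (cases s) (auto simp: step_eq Let_def)

lemma sim_inv_simulate: "sim_inv (simulate U I f sel H)"
proof -
  have "sim_inv ({}, {}, \<lambda>_. 0)" unfolding sim_inv_def lam_indep_def by simp
  then have "sim_inv ((step H ^^ k) ({}, {}, \<lambda>_. 0))" for k
    by (induction k) (simp_all add: sim_inv_step)
  then show ?thesis unfolding simulate_def .
qed

definition seen :: "'a set \<times> 'a set \<times> ('a \<Rightarrow> real) \<Rightarrow> 'a set" where
  "seen s = (case s of (M, N, w) \<Rightarrow> M \<union> N)"

lemma seen_step: "seen s \<subseteq> seen (step H s)"
  by (cases s) (auto simp: step_eq Let_def seen_def)

text \<open>Each coin is looked at only once, when its element is processed.\<close>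
lemma step_insert_seen: "e \<in> seen s \<Longrightarrow> step (insert e H) s = step H s"
proof (cases s)
  case (fields M N w)
  assume "e \<in> seen s"
  then have "chosen M N \<noteq> e" if "candidates M N \<noteq> {}"
    using chosen_candidate(2,3)[OF that] fields unfolding seen_def by auto
  then show ?thesis using fields by (auto simp: step_eq Let_def)
qed

lemma run_insert_seen: "e \<in> seen s \<Longrightarrow> (step (insert e H) ^^ k) s = (step H ^^ k) s"
proof (induction k arbitrary: s)
  case (Suc k)
  have "e \<in> seen (step H s)" using Suc.prems seen_step by blast
  then show ?case
    using Suc step_insert_seen[OF Suc.prems, of H] by (simp add: funpow_Suc_right del: funpow.simps)
qed simp

definition pruned_weight :: "'a set \<Rightarrow> real" where
  "pruned_weight H = (case simulate U I f sel H of (M, N, w) \<Rightarrow> sum w (violated_removed F \<mu> N))"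

definition rejected_weight :: "'a set \<Rightarrow> real" where
  "rejected_weight H = (case simulate U I f sel H of (M, N, w) \<Rightarrow> sum w N)"

lemma expect_pruned_ge_nonpos:
  assumes "c \<le> 0" "0 \<le> p" "p \<le> 1"
  shows "c * expect U p rejected_weight \<le> expect U p pruned_weight"
proof -
  have "0 \<le> rejected_weight H" "0 \<le> pruned_weight H" for H
    using sim_inv_simulate[of H] unfolding sim_inv_def rejected_weight_def pruned_weight_def violated_removed_def
    by (auto split: prod.splits intro!: sum_nonneg)
  then have "0 \<le> expect U p rejected_weight" "0 \<le> expect U p pruned_weight"
    using expect_mono[OF assms(2,3), of U "\<lambda>_. 0"] expect_const[OF finite_U, of p 0] by auto
  then show ?thesis using assms(1) by (meson mult_nonpos_nonneg order_trans)
qed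

end

locale greedy_potential = greedy_simulation U F \<mu> f sel
  for U :: "'a set" and F \<mu> f sel +
  fixes p :: real
  assumes p_pos: "0 < p" and p_lt_1: "p < 1" and rate_lt_1: "8 * (1 - p) < 1"
begin

definition rate :: real where "rate = 8 * (1 - p)"

definition block_max :: "'a set \<Rightarrow> 'a set \<Rightarrow> ('a \<Rightarrow> real) \<Rightarrow> real" where
  "block_max B N w = Max (w ` (N \<inter> B))"

definition block_term :: "'a set \<Rightarrow> 'a set \<times> 'a set \<times> ('a \<Rightarrow> real) \<Rightarrow> real" where
  "block_term B s = (case s of (M, N, w) \<Rightarrow>
     block_max B N w * viol_weight (1 - p) (\<mu> B) (card (M \<inter> B)) (card (N \<inter> B)))"

definition potential :: "'a set \<times> 'a set \<times> ('a \<Rightarrow> real) \<Rightarrow> real" where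
  "potential s = (case s of (M, N, w) \<Rightarrow> rate / (1 - rate) * sum w N - (\<Sum>B\<in>F. block_term B s))"

lemma rate_nonneg: "0 \<le> rate"
  using p_lt_1 unfolding rate_def by auto

lemma block_max_ge: "finite N \<Longrightarrow> y \<in> N \<inter> B \<Longrightarrow> w y \<le> block_max B N w"
  unfolding block_max_def by (intro Max_ge) auto

lemma block_max_nonneg:
  assumes "finite N" "\<forall>y\<in>N. 0 \<le> w y" "N \<inter> B \<noteq> {}"
  shows "0 \<le> block_max B N w"
proof -
  obtain y where "y \<in> N \<inter> B" using assms(3) by auto
  then show ?thesis using assms(2) block_max_ge[OF assms(1), of y B w] by force
qed

lemma block_max_update: "e \<notin> N \<Longrightarrow> block_max B N (w(e := v)) = block_max B N w"
  unfolding block_max_def by (intro arg_cong[where f = Max] image_cong) auto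

lemma block_max_insert:
  assumes "finite N" "e \<notin> N" "e \<in> B" "N \<inter> B \<noteq> {}" "\<forall>y\<in>N. v \<le> w y"
  shows "block_max B (insert e N) (w(e := v)) = block_max B N w"
proof -
  obtain y where y: "y \<in> N \<inter> B" using assms(4) by auto
  have "(w(e := v)) ` (insert e N \<inter> B) = insert v (w ` (N \<inter> B))"
    using assms(2,3) by auto
  then have "block_max B (insert e N) (w(e := v)) = max v (block_max B N w)"
    unfolding block_max_def using assms(1,4) by simp
  moreover have "v \<le> block_max B N w" using assms(5) y block_max_ge[OF assms(1) y, of w] by auto
  ultimately show ?thesis by simp
qed

lemma sum_blocks_containing_le: "(\<Sum>B\<in>{B \<in> F. e \<in> B}. rate ^ \<mu> B) \<le> rate / (1 - rate)"
proof -
  have "(\<Sum>B\<in>{B \<in> F. e \<in> B}. rate ^ \<mu> B) = (\<Sum>k\<in>\<mu> ` {B \<in> F. e \<in> B}. rate ^ k)"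
    by (simp add: sum.reindex[OF inj_on_capacity_blocks_containing])
  also have "\<dots> \<le> rate / (1 - rate)"
    using finite_F mu_pos rate_nonneg rate_lt_1 unfolding rate_def
    by (intro sum_power_le_geometric) auto
  finally show ?thesis .
qed

lemma block_term_step:
  assumes inv: "sim_inv (M, N, w)" and ne: "candidates M N \<noteq> {}"
    and e: "e = chosen M N" and v: "v = marg f M e" and B: "B \<in> F"
  shows "p * block_term B (insert e M, N, w(e := v)) + (1 - p) * block_term B (M, insert e N, w(e := v))
    \<le> block_term B (M, N, w) + (if e \<in> B then (1 - p) * v * rate ^ \<mu> B else 0)"
proof -
  have eU: "e \<in> U" "e \<notin> M" "e \<notin> N" "insert e M \<in> I"
    using chosen_candidate[OF ne] unfolding e by auto
  have MU: "M \<subseteq> U" and NU: "N \<subseteq> U" and wN: "\<forall>y\<in>N. 0 \<le> w y"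
    and vw: "\<forall>y\<in>N. v \<le> w y"
    using inv chosen_best(1)[OF ne] lam_indep_subset_U unfolding sim_inv_def e v by auto
  have fin: "finite M" "finite N" using MU NU finite_U finite_subset by auto
  have "0 \<le> v" unfolding v using eU MU by (intro marg_nonneg) auto
  let ?q = "1 - p" and ?m = "card (M \<inter> B)" and ?n = "card (N \<inter> B)" and ?A = "block_max B N w"
  have q: "0 \<le> ?q" "?q \<le> 1/4" using p_lt_1 rate_lt_1 by auto
  have A_accept: "block_max B N (w(e := v)) = ?A" using eU by (simp add: block_max_update)
  show ?thesis
  proof (cases "e \<in> B")
    case False
    then have "insert e M \<inter> B = M \<inter> B" "insert e N \<inter> B = N \<inter> B" by auto
    moreover have "block_max B (insert e N) (w(e := v)) = ?A"
      unfolding block_max_def using False eU by (intro arg_cong[where f = Max] image_cong) auto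
    ultimately show ?thesis using False A_accept unfolding block_term_def by (simp add: algebra_simps)
  next
    case True
    have "card (insert e M \<inter> B) \<le> \<mu> B" using eU(4) B unfolding lam_indep_def by auto
    moreover have cards: "card (insert e M \<inter> B) = ?m + 1" "card (insert e N \<inter> B) = ?n + 1"
      using True eU fin by (simp_all add: Int_insert_left)
    ultimately have "?m < \<mu> B" by simp
    show ?thesis
    proof (cases "N \<inter> B = {}")
      case True': True
      have A_reject: "block_max B (insert e N) (w(e := v)) = v"
        unfolding block_max_def using True True' by (simp add: Int_insert_left)
      have "viol_weight ?q (\<mu> B) ?m 1 \<le> rate ^ \<mu> B"
        unfolding rate_def using q(1) by (rule viol_weight_first)
      then have "?q * (v * viol_weight ?q (\<mu> B) ?m 1) \<le> ?q * (v * rate ^ \<mu> B)"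
        using q \<open>0 \<le> v\<close> by (intro mult_left_mono) auto
      then show ?thesis using True True' cards A_reject unfolding block_term_def by simp
    next
      case False
      have "?n \<ge> 1" using False fin by (simp add: Suc_le_eq card_gt_0_iff)
      have A_reject: "block_max B (insert e N) (w(e := v)) = ?A"
        using fin eU True False vw by (intro block_max_insert) auto
      have "0 \<le> ?A" using fin wN False by (intro block_max_nonneg)
      then have "?A * (p * viol_weight ?q (\<mu> B) (?m + 1) ?n + ?q * viol_weight ?q (\<mu> B) ?m (?n + 1))
          \<le> ?A * viol_weight ?q (\<mu> B) ?m ?n"
        using viol_weight_step[OF q \<open>?m < \<mu> B\<close> \<open>?n \<ge> 1\<close>] by (intro mult_left_mono) simp_all
      moreover have "0 \<le> ?q * v * rate ^ \<mu> B" using q \<open>0 \<le> v\<close> rate_nonneg by simp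
      ultimately show ?thesis
        using cards A_accept A_reject unfolding block_term_def by (simp add: algebra_simps)
    qed
  qed
qed

lemma potential_step:
  assumes inv: "sim_inv (M, N, w)" and ne: "candidates M N \<noteq> {}"
    and e: "e = chosen M N" and v: "v = marg f M e"
  shows "potential (M, N, w)
    \<le> p * potential (insert e M, N, w(e := v)) + (1 - p) * potential (M, insert e N, w(e := v))"
proof -
  define c where "c = rate / (1 - rate)"
  let ?s1 = "(insert e M, N, w(e := v))" and ?s2 = "(M, insert e N, w(e := v))"
  have eU: "e \<in> U" "e \<notin> N" using chosen_candidate[OF ne] unfolding e by auto
  have "finite N" using inv finite_U finite_subset unfolding sim_inv_def by auto
  have "0 \<le> v" unfolding v using chosen_candidate[OF ne] inv lam_indep_subset_U unfolding e sim_inv_def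
    by (intro marg_nonneg) auto
  have sum_N: "sum (w(e := v)) N = sum w N" using eU by (intro sum.cong) auto
  have sum_eN: "sum (w(e := v)) (insert e N) = v + sum w N" using eU \<open>finite N\<close> sum_N by simp
  have "p * (\<Sum>B\<in>F. block_term B ?s1) + (1 - p) * (\<Sum>B\<in>F. block_term B ?s2)
      = (\<Sum>B\<in>F. p * block_term B ?s1 + (1 - p) * block_term B ?s2)"
    by (simp add: sum.distrib sum_distrib_left)
  also have "\<dots> \<le> (\<Sum>B\<in>F. block_term B (M, N, w) + (if e \<in> B then (1 - p) * v * rate ^ \<mu> B else 0))"
    by (intro sum_mono block_term_step[OF inv ne e v])
  also have "\<dots> = (\<Sum>B\<in>F. block_term B (M, N, w)) + (1 - p) * v * (\<Sum>B\<in>{B \<in> F. e \<in> B}. rate ^ \<mu> B)"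
    unfolding sum.distrib sum_distrib_left sum.inter_filter[OF finite_F] by (auto intro!: sum.cong)
  also have "\<dots> \<le> (\<Sum>B\<in>F. block_term B (M, N, w)) + (1 - p) * v * c"
    using sum_blocks_containing_le \<open>0 \<le> v\<close> p_lt_1 unfolding c_def by (intro add_left_mono mult_left_mono) auto
  finally have "p * (\<Sum>B\<in>F. block_term B ?s1) + (1 - p) * (\<Sum>B\<in>F. block_term B ?s2)
      \<le> (\<Sum>B\<in>F. block_term B (M, N, w)) + (1 - p) * v * c" .
  then show ?thesis unfolding potential_def prod.case sum_N sum_eN c_def[symmetric] by (simp add: algebra_simps)
qed

lemma potential_le_value:
  assumes inv: "sim_inv (M, N, w)" and c: "rate / (1 - rate) \<le> c"
  shows "potential (M, N, w) \<le> sum w (violated_removed F \<mu> N) - (1 - c) * sum w N"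
proof -
  have NU: "N \<subseteq> U" and wN: "\<forall>y\<in>N. 0 \<le> w y" using inv unfolding sim_inv_def by auto
  have fin: "finite N" using NU finite_U finite_subset by auto
  define V where "V = {B \<in> F. \<mu> B < card (N \<inter> B)}"
  have X: "\<Union>{N \<inter> B | B. B \<in> F \<and> card (N \<inter> B) > \<mu> B} = (\<Union>B\<in>V. N \<inter> B)"
    unfolding V_def by auto
  have "sum w (violated_removed F \<mu> N) = sum w N - sum w (\<Union>B\<in>V. N \<inter> B)"
    unfolding violated_removed_def X using fin by (intro sum_diff) auto
  moreover have "sum w (\<Union>B\<in>V. N \<inter> B) \<le> (\<Sum>B\<in>F. block_term B (M, N, w))"
  proof -
    have "sum w (\<Union>B\<in>V. N \<inter> B) \<le> (\<Sum>B\<in>V. sum w (N \<inter> B))"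
      using finite_F fin wN unfolding V_def by (intro sum_UN_le) auto
    also have "\<dots> \<le> (\<Sum>B\<in>V. block_term B (M, N, w))"
    proof (rule sum_mono)
      fix B assume B: "B \<in> V"
      then have "N \<inter> B \<noteq> {}" unfolding V_def by auto
      have "sum w (N \<inter> B) \<le> real (card (N \<inter> B)) * block_max B N w"
        using fin by (intro sum_bounded_above block_max_ge) auto
      also have "\<dots> \<le> viol_weight (1 - p) (\<mu> B) (card (M \<inter> B)) (card (N \<inter> B)) * block_max B N w"
        using B fin wN \<open>N \<inter> B \<noteq> {}\<close> unfolding V_def
        by (intro mult_right_mono viol_weight_ge_card block_max_nonneg) auto
      finally show "sum w (N \<inter> B) \<le> block_term B (M, N, w)"
        unfolding block_term_def by (simp add: mult.commute)
    qed
    also have "\<dots> \<le> (\<Sum>B\<in>F. block_term B (M, N, w))"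
    proof (rule sum_mono2[OF finite_F])
      show "V \<subseteq> F" unfolding V_def by auto
      show "0 \<le> block_term B (M, N, w)" for B
        using fin wN p_lt_1 block_max_nonneg[OF fin wN, of B]
        by (cases "N \<inter> B = {}") (auto simp: block_term_def intro!: mult_nonneg_nonneg viol_weight_nonneg)
    qed
    finally show ?thesis .
  qed
  moreover have "rate / (1 - rate) * sum w N \<le> c * sum w N"
    using c wN by (intro mult_right_mono sum_nonneg) auto
  ultimately show ?thesis unfolding potential_def by (simp add: algebra_simps)
qed

lemma potential_le_expect_run:
  "sim_inv s \<Longrightarrow> potential s \<le> expect U p (\<lambda>H. potential ((step H ^^ k) s))"
proof (induction k arbitrary: s)
  case 0
  then show ?case using expect_const[OF finite_U] by simp
next
  case (Suc k)
  obtain M N w where s: "s = (M, N, w)" by (cases s)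
  show ?case
  proof (cases "candidates M N = {}")
    case True
    then have "(step H ^^ Suc k) s = (step H ^^ k) s" for H
      unfolding funpow_Suc_right o_apply s by (simp add: step_eq)
    then show ?thesis using Suc by simp
  next
    case False
    define e where "e = chosen M N"
    define w' where "w' = w(e := marg f M e)"
    let ?s1 = "(insert e M, N, w')" and ?s2 = "(M, insert e N, w')"
    have "e \<in> U" using chosen_candidate[OF False] unfolding e_def by simp
    have inv: "sim_inv ?s1" "sim_inv ?s2"
      using sim_inv_branches[OF _ False e_def w'_def] Suc.prems s by auto
    define Y where "Y H = potential ((step H ^^ k) ?s1)" for H
    define Z where "Z H = potential ((step H ^^ k) ?s2)" for H
    have "(step H ^^ Suc k) s = (step H ^^ k) (if e \<in> H then ?s1 else ?s2)" for H
      unfolding funpow_Suc_right o_apply s using False by (simp add: step_eq e_def w'_def Let_def)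
    then have run: "potential ((step H ^^ Suc k) s) = (if e \<in> H then Y H else Z H)" for H
      unfolding Y_def Z_def by simp
    have "Y (insert e H) = Y H" "Z (insert e H) = Z H" for H
      unfolding Y_def Z_def by (simp_all add: run_insert_seen seen_def)
    then have "expect U p (\<lambda>H. potential ((step H ^^ Suc k) s)) = p * expect U p Y + (1 - p) * expect U p Z"
      unfolding run using finite_U \<open>e \<in> U\<close> by (intro expect_branch)
    moreover have "potential s \<le> p * potential ?s1 + (1 - p) * potential ?s2"
      unfolding s w'_def using Suc.prems s False e_def by (intro potential_step) auto
    moreover have "p * potential ?s1 + (1 - p) * potential ?s2 \<le> p * expect U p Y + (1 - p) * expect U p Z"
      unfolding Y_def Z_def using Suc.IH inv p_pos p_lt_1 by (intro add_mono mult_left_mono) auto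
    ultimately show ?thesis by simp
  qed
qed

lemma expect_pruned_ge:
  assumes "rate / (1 - rate) \<le> c"
  shows "(1 - c) * expect U p rejected_weight \<le> expect U p pruned_weight"
proof -
  let ?s0 = "({}, {}, \<lambda>_. 0) :: 'a set \<times> 'a set \<times> ('a \<Rightarrow> real)"
  have "sim_inv ?s0" unfolding sim_inv_def lam_indep_def by simp
  moreover have "potential ?s0 = 0" unfolding potential_def block_term_def by simp
  ultimately have "0 \<le> expect U p (\<lambda>H. potential (simulate U I f sel H))"
    unfolding simulate_def using potential_le_expect_run by metis
  also have "\<dots> \<le> expect U p (\<lambda>H. pruned_weight H - (1 - c) * rejected_weight H)"
  proof (rule expect_mono)
    show "potential (simulate U I f sel H) \<le> pruned_weight H - (1 - c) * rejected_weight H" for H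
      using sim_inv_simulate[of H] potential_le_value[OF _ assms]
      unfolding pruned_weight_def rejected_weight_def by (cases "simulate U I f sel H") auto
  qed (use p_pos p_lt_1 in auto)
  finally show ?thesis unfolding expect_diff by simp
qed

end

theorem lemma3:
  fixes U :: "'a set" and F :: "'a set set" and \<mu> :: "'a set \<Rightarrow> nat"
    and f :: "'a set \<Rightarrow> real" and p :: real
    and sel :: "'a set \<Rightarrow> 'a set \<Rightarrow> 'a set \<Rightarrow> 'a"
  assumes finU: "finite U"
    and FU: "\<forall>B\<in>F. B \<subseteq> U"
    and lam: "laminar F"
    and mu_pos: "\<forall>B\<in>F. \<mu> B > 0"
    and mu_strict: "\<forall>B\<in>F. \<forall>B'\<in>F. B \<subset> B' \<longrightarrow> \<mu> B < \<mu> B'"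
    and f_nonneg: "\<forall>T. T \<subseteq> U \<longrightarrow> f T \<ge> 0"
    and f_mono: "\<forall>S T. S \<subseteq> T \<longrightarrow> T \<subseteq> U \<longrightarrow> f S \<le> f T"
    and f_sub: "submodular_on U f"
    and p: "0 < p" "p < 1"
    and sel: "\<forall>M N C. C \<noteq> {} \<longrightarrow> sel M N C \<in> C"
    and beta: "2 * exp 1 * (1 - p) < 1"
  shows "expect U p (\<lambda>H. case simulate U (lam_indep U F \<mu>) f sel H of (M, N, w) \<Rightarrow>
             sum w (violated_removed F \<mu> N))
         \<ge> (1 - 2 * (2 * exp 1 * (1 - p)) / (1 - 2 * exp 1 * (1 - p)) ^ 3)
           * expect U p (\<lambda>H. case simulate U (lam_indep U F \<mu>) f sel H of (M, N, w) \<Rightarrow> sum w N)"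
proof -
  interpret greedy_simulation U F \<mu> f sel
    using finU FU lam mu_pos mu_strict f_mono f_sub sel by unfold_locales
  define c where "c = 2 * (2 * exp 1 * (1 - p)) / (1 - 2 * exp 1 * (1 - p)) ^ 3"
  have "(1 - c) * expect U p rejected_weight \<le> expect U p pruned_weight"
  proof (cases "c < 1")
    case False
    then show ?thesis using p by (intro expect_pruned_ge_nonpos) auto
  next
    case True
    with p beta have "8 * (1 - p) < 1" "8 * (1 - p) / (1 - 8 * (1 - p)) \<le> c"
      unfolding c_def using rate_ratio_le_beta_bound[of "1 - p"] by auto
    interpret greedy_potential U F \<mu> f sel p
      using p \<open>8 * (1 - p) < 1\<close> by unfold_locales auto
    show ?thesis using expect_pruned_ge \<open>_ \<le> c\<close> unfolding rate_def by blast
  qed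
  then show ?thesis unfolding c_def pruned_weight_def rejected_weight_def by simp
qed

end
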